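(* For every set $\mathfrak W$ of bracket patterns, $\bigcup_{w\in\langle\!\langle\mathfrak W\rangle\!\rangle}A(w)=\bigcup_{w\in\mathfrak W}A(w)$. In particular, $\bigcup_{w'\in\langle\!\langle w\rangle\!\rangle}A(w')=A(w)$ for every bracket pattern $w$.
   Context: $\mathbb N=\{1,2,\dots\}$, $\mathbb N_0=\mathbb N\cup\{0\}$. A bracket pattern is a non-empty finite subset $w\subseteq\mathbb N$; $\|w\|:=\max(w)$. For bracket patterns $w,w'$: superposition $w\cup w'$; for $j\in w$ the projection $\cap_j w:=\{i\in w\mid i\le j\}$; the dual $w^\dagger:=\{\|w\|-i\mid i\in\mathbb N_0,\ i<\|w\|,\ i\notin w\}$. A bracket pattern category is a (possibly empty) set of bracket patterns closed under superposition, duals and projections; $\langle\!\langle\mathfrak W\rangle\!\rangle$ is the smallest bracket pattern category containing $\mathfrak W$, and $\langle\!\langle w\rangle\!\rangle:=\langle\!\langle\{w\}\rangle\!\rangle$. The completion of a bracket pattern $w$ is $A(w):=\{j-i\mid j\in w,\ i\in\mathbb N_0,\ i\notin w,\ i<j\}$. *)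

theory Defs
  imports Main
begin

definition bracket_pattern :: "nat set \<Rightarrow> bool" where
  "bracket_pattern w \<longleftrightarrow> finite w \<and> w \<noteq> {} \<and> 0 \<notin> w"

definition bnorm :: "nat set \<Rightarrow> nat" where
  "bnorm w = Max w"

definition bproj :: "nat \<Rightarrow> nat set \<Rightarrow> nat set" where
  "bproj j w = {i \<in> w. i \<le> j}"

definition bdual :: "nat set \<Rightarrow> nat set" where
  "bdual w = {bnorm w - i | i. i < bnorm w \<and> i \<notin> w}"

definition completion :: "nat set \<Rightarrow> nat set" where
  "completion w = {j - i | j i. j \<in> w \<and> i \<notin> w \<and> i < j}"

inductive_set bp_cat :: "nat set set \<Rightarrow> nat set set" for W where
  gen: "w \<in> W \<Longrightarrow> w \<in> bp_cat W"
| sup: "w \<in> bp_cat W \<Longrightarrow> w' \<in> bp_cat W \<Longrightarrow> w \<union> w' \<in> bp_cat W"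
| dual: "w \<in> bp_cat W \<Longrightarrow> bdual w \<in> bp_cat W"
| proj: "w \<in> bp_cat W \<Longrightarrow> j \<in> w \<Longrightarrow> bproj j w \<in> bp_cat W"

end

theory Submission
  imports Defs
begin

(* None of the three operations creates new differences: a difference j - i of the
   superposition w \<union> w' already occurs in w or in w'; projecting only removes elements above j;
   and the reflection i \<mapsto> ||w|| - i turns a pair i \<notin> dual w, j \<in> dual w into the pair
   ||w|| - j \<notin> w, ||w|| - i \<in> w with the same difference. *)

lemma bracket_pattern_Un:
  "bracket_pattern w \<Longrightarrow> bracket_pattern w' \<Longrightarrow> bracket_pattern (w \<union> w')"
  by (auto simp: bracket_pattern_def)

lemma bracket_pattern_bproj:
  "bracket_pattern w \<Longrightarrow> j \<in> w \<Longrightarrow> bracket_pattern (bproj j w)"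
  by (auto simp: bracket_pattern_def bproj_def)

lemma bracket_pattern_bdual:
  assumes "bracket_pattern w"
  shows "bracket_pattern (bdual w)"
proof -
  have w: "finite w" "w \<noteq> {}" "0 \<notin> w"
    using assms by (auto simp: bracket_pattern_def)
  then have "bnorm w \<in> w"
    by (simp add: bnorm_def)
  with w(3) have "0 < bnorm w"
    by (cases "bnorm w") auto
  with w(3) have "bnorm w \<in> bdual w"
    unfolding bdual_def by force
  moreover have "bdual w \<subseteq> (\<lambda>i. bnorm w - i) ` {..<bnorm w}"
    unfolding bdual_def by auto
  then have "finite (bdual w)"
    by (rule finite_surj[OF finite_lessThan])
  moreover have "0 \<notin> bdual w"
    unfolding bdual_def by auto
  ultimately show ?thesis
    unfolding bracket_pattern_def by auto
qed

lemma completion_Un_subset: "completion (w \<union> w') \<subseteq> completion w \<union> completion w'"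
  unfolding completion_def by blast

lemma completion_bproj_subset: "completion (bproj j w) \<subseteq> completion w"
  unfolding completion_def bproj_def by fastforce

lemma completion_bdual_subset:
  assumes "finite w" "w \<noteq> {}"
  shows "completion (bdual w) \<subseteq> completion w"
proof
  fix x assume "x \<in> completion (bdual w)"
  then obtain a b where x: "x = a - b" and a: "a \<in> bdual w" and b: "b \<notin> bdual w"
    and "b < a"
    unfolding completion_def by auto
  have norm_in: "bnorm w \<in> w"
    using assms by (simp add: bnorm_def)
  obtain i where i: "a = bnorm w - i" "i < bnorm w" "i \<notin> w"
    using a unfolding bdual_def by auto
  define k where "k = bnorm w - b"
  have k: "b = bnorm w - k" "k \<le> bnorm w" "i < k"
    using \<open>b < a\<close> i unfolding k_def by auto
  have "k \<in> w"
  proof (cases "k = bnorm w")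
    case True
    with norm_in show ?thesis by simp
  next
    case False
    with k b show ?thesis
      unfolding bdual_def by auto
  qed
  moreover have "x = k - i"
    using x i k by simp
  ultimately show "x \<in> completion w"
    unfolding completion_def using i k by blast
qed

lemma bp_cat_bracket_pattern:
  assumes "w \<in> bp_cat W" "\<forall>v\<in>W. bracket_pattern v"
  shows "bracket_pattern w"
  using assms(1)
  by induction (use assms(2) bracket_pattern_Un bracket_pattern_bdual bracket_pattern_bproj in auto)

lemma completion_bp_cat_subset:
  assumes "w \<in> bp_cat W" "\<forall>v\<in>W. bracket_pattern v"
  shows "completion w \<subseteq> (\<Union>v\<in>W. completion v)"
  using assms(1)
proof induction
  case (gen w)
  then show ?case by auto
next
  case (sup w w')
  then show ?case using completion_Un_subset[of w w'] by blast
next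
  case (dual w)
  have "bracket_pattern w"
    using dual.hyps assms(2) by (rule bp_cat_bracket_pattern)
  then have "completion (bdual w) \<subseteq> completion w"
    by (intro completion_bdual_subset) (auto simp: bracket_pattern_def)
  with dual.IH show ?case by blast
next
  case (proj w j)
  then show ?case using completion_bproj_subset[of j w] by blast
qed

lemma UN_completion_bp_cat:
  assumes "\<forall>w\<in>W. bracket_pattern w"
  shows "(\<Union>w\<in>bp_cat W. completion w) = (\<Union>w\<in>W. completion w)"
  using completion_bp_cat_subset[OF _ assms] bp_cat.gen[of _ W] by blast

theorem proposition7p6:
  "(\<forall>W. (\<forall>w\<in>W. bracket_pattern w) \<longrightarrow>
        (\<Union>w\<in>bp_cat W. completion w) = (\<Union>w\<in>W. completion w)) \<and>
   (\<forall>w. bracket_pattern w \<longrightarrow> (\<Union>w'\<in>bp_cat {w}. completion w') = completion w)"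
  using UN_completion_bp_cat[of "{_}"] UN_completion_bp_cat by auto

end
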